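(* For every $\alpha\in(0,1)$, the function $\delta\mapsto\psi_2\big(\alpha,L(\alpha;\delta);\delta\big)$ is strictly decreasing on $\delta\in(0,\infty)$.
   Context: For real $\alpha\ge0$, $\sigma^2\ge0$, $(\alpha,\sigma^2)\ne(0,0)$: $\psi_2(\alpha,\sigma^2;\delta)=\frac4\delta\big(\alpha^2+\sigma^2+1-\int_0^{\pi/2}\frac{2\alpha^2\sin^2\theta+\sigma^2}{(\alpha^2\sin^2\theta+\sigma^2)^{1/2}}d\theta\big)$. For $s\ge0$ let $\phi_1(s)=\int_0^{\pi/2}\frac{\sin^2\theta}{(\sin^2\theta+s^2)^{1/2}}d\theta$ (strictly decreasing from $1$ to $0$, inverse $\phi_1^{-1}:(0,1]\to[0,\infty)$) and $\phi_2(s)=\int_0^{\pi/2}\frac{2\sin^2\theta+s^2}{(\sin^2\theta+s^2)^{1/2}}d\theta$. For $\alpha\in(0,1)$, $\delta>0$: $L(\alpha;\delta)=\frac4\delta\Big(1-\frac{\phi_2^2(\phi_1^{-1}(\alpha))}{4[1+(\phi_1^{-1}(\alpha))^2]}\Big)$. *)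

theory Defs
  imports "HOL-Analysis.Analysis"
begin

text \<open>psi2 a s d stands for psi_2(alpha, sigma^2; delta) with a = alpha, s = sigma^2, d = delta.\<close>
definition psi2 :: "real \<Rightarrow> real \<Rightarrow> real \<Rightarrow> real" where
  "psi2 a s d = 4 / d * (a\<^sup>2 + s + 1 -
     integral {0..pi/2} (\<lambda>\<theta>. (2 * a\<^sup>2 * (sin \<theta>)\<^sup>2 + s) / sqrt (a\<^sup>2 * (sin \<theta>)\<^sup>2 + s)))"

definition phi1 :: "real \<Rightarrow> real" where
  "phi1 s = integral {0..pi/2} (\<lambda>\<theta>. (sin \<theta>)\<^sup>2 / sqrt ((sin \<theta>)\<^sup>2 + s\<^sup>2))"

definition phi2 :: "real \<Rightarrow> real" where
  "phi2 s = integral {0..pi/2} (\<lambda>\<theta>. (2 * (sin \<theta>)\<^sup>2 + s\<^sup>2) / sqrt ((sin \<theta>)\<^sup>2 + s\<^sup>2))"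

definition phi1_inv :: "real \<Rightarrow> real" where
  "phi1_inv a = (THE s. 0 \<le> s \<and> phi1 s = a)"

definition L :: "real \<Rightarrow> real \<Rightarrow> real" where
  "L a d = 4 / d * (1 - (phi2 (phi1_inv a))\<^sup>2 / (4 * (1 + (phi1_inv a)\<^sup>2)))"

end

theory Submission
  imports Defs
begin

text \<open>
  Put \<open>t = phi1_inv \<alpha>\<close> and \<open>C = 1 - phi2 t\<^sup>2 / (4 (1 + t\<^sup>2))\<close>, so that \<open>s = L(\<alpha>;\<delta>) = 4 C / \<delta>\<close>
  and \<open>\<psi>\<^sub>2(\<alpha>, s; \<delta>) = F(s) / C\<close> with \<open>F(s) = s \<psi>\<^sub>2(\<alpha>, s; 4)\<close>. As \<open>\<delta>\<close> grows, \<open>s\<close> decreases,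
  so it suffices that \<open>C > 0\<close> and that \<open>F\<close> is strictly increasing on \<open>(0, \<infinity>)\<close>.

  Both follow from pointwise majorants of the integrands chosen so that their integrals over
  \<open>[0, \<pi>/2]\<close> are elementary (\<open>\<integral> sin = 1\<close>, \<open>\<integral> 1/(p + q sin\<^sup>2) = \<pi>/(2\<surd>(p(p+q)))\<close>):
  they give \<open>phi2 t < 2\<surd>(1 + t\<^sup>2)\<close>, i.e. \<open>C > 0\<close>, and, differentiating under the integral sign,
  \<open>F'(s) > 0\<close> up to an elementary inequality in \<open>\<alpha>\<close> and \<open>s\<close>. Finally \<open>t > 0\<close> because \<open>phi1\<close>
  is continuous and strictly decreasing with \<open>phi1 0 = 1 > \<alpha>\<close>.
\<close>

section \<open>Integrals over a quarter period\<close>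

lemma has_integral_of_has_real_derivative:
  fixes F f :: "real \<Rightarrow> real"
  assumes "a \<le> b" "\<And>x. x \<in> {a..b} \<Longrightarrow> (F has_real_derivative f x) (at x)"
  shows "(f has_integral (F b - F a)) {a..b}"
  using assms
  by (intro fundamental_theorem_of_calculus)
     (simp_all add: has_real_derivative_iff_has_vector_derivative has_vector_derivative_at_within)

lemma sin_nonneg_0_pi_half: "x \<in> {0..pi/2} \<Longrightarrow> 0 \<le> sin x"
  using pi_gt3 by (intro sin_ge_zero) auto

lemma has_integral_sin_0_pi_half: "(sin has_integral 1) {0..pi/2}"
proof -
  have "(sin has_integral (- cos (pi/2)) - (- cos 0)) {0..pi/2}"
    by (rule has_integral_of_has_real_derivative) (auto intro!: derivative_eq_intros)
  then show ?thesis by simp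
qed

lemma has_integral_sin_squared_0_pi_half: "((\<lambda>t. (sin t)\<^sup>2) has_integral pi/4) {0..pi/2}"
proof -
  have "((\<lambda>t. (t - sin t * cos t) / 2) has_real_derivative (sin x)\<^sup>2) (at x)" for x
  proof -
    have "(1 - (cos x * cos x - sin x * sin x)) / 2 = (sin x)\<^sup>2"
      using sin_cos_squared_add3[of x] by (simp add: power2_eq_square algebra_simps)
    then show ?thesis by (auto intro!: derivative_eq_intros simp del: sin_cos_squared_add3)
  qed
  then show ?thesis
    using has_integral_of_has_real_derivative[of 0 "pi/2" "\<lambda>t. (t - sin t * cos t) / 2"] by simp
qed

lemma has_real_derivative_arccot_quotient:
  fixes k m x :: real
  assumes "k > 0" "m > 0" "sin x > 0"
  shows "((\<lambda>t. - arctan (cos t / (k * sin t)) / m) has_real_derivative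
           k / ((cos x)\<^sup>2 + k\<^sup>2 * (sin x)\<^sup>2) / m) (at x)"
proof -
  have "((\<lambda>t. - arctan (cos t / (k * sin t)) / m) has_real_derivative
     - (inverse (1 + (cos x / (k * sin x))\<^sup>2) *
        ((- sin x * (k * sin x) - cos x * (k * cos x)) / (k * sin x)\<^sup>2)) / m) (at x)"
    using assms
    by (auto intro!: derivative_eq_intros DERIV_arctan[THEN DERIV_chain2]
             simp: power2_eq_square mult_ac)
  moreover have "- sin x * (k * sin x) - cos x * (k * cos x) = - k"
    by (simp add: algebra_simps flip: power2_eq_square distrib_left)
  moreover have "inverse (1 + (cos x / (k * sin x))\<^sup>2) =
      (k * sin x)\<^sup>2 / ((cos x)\<^sup>2 + k\<^sup>2 * (sin x)\<^sup>2)"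
    using assms by (simp add: field_simps power2_eq_square)
  moreover have "(cos x)\<^sup>2 + k\<^sup>2 * (sin x)\<^sup>2 > 0"
    using assms by (simp add: add_nonneg_pos)
  ultimately show ?thesis
    using assms by (simp add: power_mult_distrib)
qed

text \<open>
  The antiderivative \<open>arctan (k tan t) / m\<close> breaks down at \<open>\<pi>/2\<close>, so on \<open>[\<pi>/4, \<pi>/2]\<close> it is
  replaced by \<open>- arctan (cot t / k) / m\<close>.
\<close>

lemma has_integral_inverse_sin_squared:
  fixes p q :: real
  assumes p: "p > 0" and q: "q \<ge> 0"
  shows "((\<lambda>t. 1 / (p + q * (sin t)\<^sup>2)) has_integral pi / (2 * sqrt (p * (p + q)))) {0..pi/2}"
proof -
  define k where "k = sqrt (p + q) / sqrt p"
  define m where "m = sqrt p * sqrt (p + q)"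
  have k: "k > 0" "k\<^sup>2 = (p + q) / p" using p q by (simp_all add: k_def power_divide)
  have m: "m > 0" "m = p * k" using p q by (simp_all add: m_def k_def field_simps)
  have integrand: "k / ((cos t)\<^sup>2 + k\<^sup>2 * (sin t)\<^sup>2) / m = 1 / (p + q * (sin t)\<^sup>2)" for t
  proof -
    have "(cos t)\<^sup>2 + k\<^sup>2 * (sin t)\<^sup>2 = (p + q * (sin t)\<^sup>2) / p"
      using p by (simp add: k field_simps cos_squared_eq)
    then have "k / ((cos t)\<^sup>2 + k\<^sup>2 * (sin t)\<^sup>2) / m = k / ((p + q * (sin t)\<^sup>2) / p) / (p * k)"
      using m by simp
    also have "\<dots> = 1 / (p + q * (sin t)\<^sup>2)"
      using p k by simp
    finally show ?thesis .
  qed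
  define G1 where "G1 t = arctan (k * tan t) / m" for t
  define G2 where "G2 t = - arctan (cos t / (k * sin t)) / m" for t
  have left: "((\<lambda>t. 1 / (p + q * (sin t)\<^sup>2)) has_integral G1 (pi/4) - G1 0) {0..pi/4}"
  proof (rule has_integral_of_has_real_derivative)
    fix x assume "x \<in> {0..pi/4}"
    then have "cos x > 0" using pi_gt3 by (intro cos_gt_zero_pi) auto
    then have "(k * inverse ((cos x)\<^sup>2)) * inverse (1 + (k * tan x)\<^sup>2) / m
               = k / ((cos x)\<^sup>2 + k\<^sup>2 * (sin x)\<^sup>2) / m"
      by (simp add: tan_def field_simps power2_eq_square)
    moreover have "(G1 has_real_derivative (k * inverse ((cos x)\<^sup>2)) * inverse (1 + (k * tan x)\<^sup>2) / m) (at x)"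
      unfolding G1_def using \<open>cos x > 0\<close> m
      by (auto intro!: derivative_eq_intros DERIV_arctan[THEN DERIV_chain2])
    ultimately show "(G1 has_real_derivative 1 / (p + q * (sin x)\<^sup>2)) (at x)"
      by (simp only: integrand)
  qed (use pi_gt3 in auto)
  have right: "((\<lambda>t. 1 / (p + q * (sin t)\<^sup>2)) has_integral G2 (pi/2) - G2 (pi/4)) {pi/4..pi/2}"
  proof (rule has_integral_of_has_real_derivative)
    fix x assume "x \<in> {pi/4..pi/2}"
    then have "sin x > 0" using pi_gt3 by (intro sin_gt_zero) auto
    then show "(G2 has_real_derivative 1 / (p + q * (sin x)\<^sup>2)) (at x)"
      using has_real_derivative_arccot_quotient[OF k(1) m(1)]
      unfolding G2_def[abs_def] integrand by blast
  qed (use pi_gt3 in auto)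
  have "arctan (1/k) = pi/2 - arctan k"
    using arctan_inverse[of k] k by (simp add: inverse_eq_divide)
  then have "G1 (pi/4) - G1 0 + (G2 (pi/2) - G2 (pi/4)) = pi/2 / m"
    using k by (simp add: G1_def G2_def tan_45 sin_45 cos_45 diff_divide_distrib add_divide_distrib)
  also have "\<dots> = pi / (2 * sqrt (p * (p + q)))"
    by (simp add: m_def real_sqrt_mult)
  finally show ?thesis
    using has_integral_combine[OF _ _ left right] pi_gt3 by simp
qed

lemma has_real_derivative_parametric_integral:
  fixes f f' :: "real \<Rightarrow> real \<Rightarrow> real"
  assumes U: "open U" "convex U" "x \<in> U"
    and f': "\<And>s t. s \<in> U \<Longrightarrow> t \<in> {a..b} \<Longrightarrow> ((\<lambda>s. f s t) has_real_derivative f' s t) (at s)"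
    and f: "\<And>s. s \<in> U \<Longrightarrow> f s integrable_on {a..b}"
    and cont: "continuous_on (U \<times> {a..b}) (\<lambda>(s, t). f' s t)"
  shows "((\<lambda>s. integral {a..b} (f s)) has_real_derivative integral {a..b} (f' x)) (at x)"
proof -
  have "((\<lambda>s. integral (cbox a b) (f s)) has_field_derivative integral (cbox a b) (f' x))
          (at x within U)"
  proof (rule leibniz_rule_field_derivative[where f = f and fx = f' and U = U, OF _ _ _ U(3,2)])
    fix s t assume "s \<in> U" "t \<in> cbox a b"
    then show "((\<lambda>s. f s t) has_field_derivative f' s t) (at s within U)"
      using f'[of s t] unfolding cbox_interval by (blast intro: has_field_derivative_at_within)
  next
    fix s assume "s \<in> U"
    then show "f s integrable_on cbox a b" using f unfolding cbox_interval by blast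
  next
    show "continuous_on (U \<times> cbox a b) (\<lambda>(s, t). f' s t)" using cont unfolding cbox_interval .
  qed
  moreover have "at x within U = at x" using U by (intro at_within_open)
  ultimately show ?thesis unfolding cbox_interval by simp
qed

section \<open>Pointwise majorants\<close>

text \<open>
  In both majorants, writing \<open>\<surd>(y\<^sup>2 + t\<^sup>2) = t + d\<close> with \<open>d \<ge> 0\<close> turns the difference of
  the squared sides into a polynomial in \<open>d\<close> and \<open>t\<close> with nonnegative coefficients.
\<close>

lemma phi2_integrand_le:
  fixes y t :: real
  assumes y: "y \<ge> 0" and t: "t > 0"
  shows "(2*y\<^sup>2 + t\<^sup>2) / sqrt (y\<^sup>2 + t\<^sup>2) \<le> 2*y + t^3 / (t\<^sup>2 + 4*y\<^sup>2)"
proof -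
  define x where "x = sqrt (y\<^sup>2 + t\<^sup>2)"
  have x: "x > 0" "x\<^sup>2 = y\<^sup>2 + t\<^sup>2" "t \<le> x"
    using t by (auto simp: x_def add_nonneg_pos intro: real_le_rsqrt)
  define d where "d = x - t"
  have d: "d \<ge> 0" "x = t + d" using x by (auto simp: d_def)
  define E where "E = t\<^sup>2 + 4*y\<^sup>2"
  have E: "E > 0" "E = 4*x\<^sup>2 - 3*t\<^sup>2" using t x by (auto simp: E_def add_pos_nonneg)
  define L where "L = (2*y\<^sup>2 + t\<^sup>2)*E - t^3*x"
  define R where "R = 2*x*y*E"
  have "R\<^sup>2 - L\<^sup>2 = 4*x\<^sup>2*(x\<^sup>2 - t\<^sup>2)*(4*x\<^sup>2 - 3*t\<^sup>2)\<^sup>2 - ((2*x\<^sup>2 - t\<^sup>2)*(4*x\<^sup>2 - 3*t\<^sup>2) - t^3*x)\<^sup>2"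
    unfolding R_def L_def E(2) using x(2) by algebra
  also have "\<dots> = 8*d*t^7 + 27*d^2*t^6 + 76*d^3*t^5 + 64*d^4*t^4 + 16*d^5*t^3"
    unfolding d(2) by algebra
  also have "\<dots> \<ge> 0" using d(1) t by simp
  finally have "L\<^sup>2 \<le> R\<^sup>2" by simp
  moreover have "0 \<le> R" using x(1) y E(1) by (simp add: R_def)
  ultimately have "L \<le> R" by (rule power2_le_imp_le)
  have "2*y + t^3 / (t\<^sup>2 + 4*y\<^sup>2) - (2*y\<^sup>2 + t\<^sup>2) / sqrt (y\<^sup>2 + t\<^sup>2) = (R - L) / (x * E)"
    unfolding R_def L_def x_def[symmetric] E_def[symmetric] using x(1) E(1)
    by (simp add: field_simps)
  also have "\<dots> \<ge> 0" using \<open>L \<le> R\<close> x(1) E(1) by simp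
  finally show ?thesis by simp
qed

lemma psi2_slope_integrand_le:
  fixes y t :: real
  assumes y: "y \<ge> 0" and t: "t > 0"
  shows "(3*(y\<^sup>2 + t\<^sup>2)\<^sup>2 + (y\<^sup>2)\<^sup>2) / (2*(y\<^sup>2 + t\<^sup>2) * sqrt (y\<^sup>2 + t\<^sup>2))
           \<le> 2*y + 3/2*t^3 / (t\<^sup>2 + 3*y\<^sup>2)"
proof -
  define x where "x = sqrt (y\<^sup>2 + t\<^sup>2)"
  have x: "x > 0" "x\<^sup>2 = y\<^sup>2 + t\<^sup>2" "t \<le> x"
    using t by (auto simp: x_def add_nonneg_pos intro: real_le_rsqrt)
  define d where "d = x - t"
  have d: "d \<ge> 0" "x = t + d" using x by (auto simp: d_def)
  define E where "E = t\<^sup>2 + 3*y\<^sup>2"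
  have E: "E > 0" "E = 3*x\<^sup>2 - 2*t\<^sup>2" using t x by (auto simp: E_def add_pos_nonneg)
  define L where "L = (3*(x\<^sup>2)\<^sup>2 + (y\<^sup>2)\<^sup>2)*E - 3*t^3*x^3"
  define R where "R = 4*y*x^3*E"
  have "R\<^sup>2 - L\<^sup>2 = 16*(x\<^sup>2 - t\<^sup>2)*x^6*(3*x\<^sup>2 - 2*t\<^sup>2)\<^sup>2
                    - ((3*x^4 + (x\<^sup>2 - t\<^sup>2)\<^sup>2)*(3*x\<^sup>2 - 2*t\<^sup>2) - 3*t^3*x^3)\<^sup>2"
    unfolding R_def L_def E(2) using x(2) by algebra
  also have "\<dots> = 32*d*t^11 + 151*d^2*t^10 + 468*d^3*t^9 + 1242*d^4*t^8 + 2328*d^5*t^7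
                  + 2607*d^6*t^6 + 1644*d^7*t^5 + 540*d^8*t^4 + 72*d^9*t^3"
    unfolding d(2) by algebra
  also have "\<dots> \<ge> 0" using d(1) t by simp
  finally have "L\<^sup>2 \<le> R\<^sup>2" by simp
  moreover have "0 \<le> R" using x(1) y E(1) by (simp add: R_def)
  ultimately have "L \<le> R" by (rule power2_le_imp_le)
  have "2*y + 3/2*t^3 / (t\<^sup>2 + 3*y\<^sup>2)
      - (3*(y\<^sup>2 + t\<^sup>2)\<^sup>2 + (y\<^sup>2)\<^sup>2) / (2*(y\<^sup>2 + t\<^sup>2) * sqrt (y\<^sup>2 + t\<^sup>2)) = (R - L) / (2 * x^3 * E)"
    unfolding R_def L_def x_def[symmetric] E_def[symmetric] x(2)[symmetric] using x(1) E(1)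
    by (simp add: field_simps power2_eq_square power3_eq_cube)
  also have "\<dots> \<ge> 0" using \<open>L \<le> R\<close> x(1) E(1) by simp
  finally show ?thesis by simp
qed

lemma pi_lt_31416: "pi < 31416/10000"
  using pi_approx(2) by simp

lemma phi2_majorant_lt:
  fixes u :: real
  assumes u: "u > 0"
  shows "2 + pi/2 * u / sqrt (u + 4) < 2 * sqrt (1 + u)"
proof -
  define r where "r = sqrt (1 + u)"
  define w where "w = sqrt (u + 4)"
  have r: "r > 0" "r\<^sup>2 = 1 + u" using u by (auto simp: r_def)
  have w: "w > 0" "w\<^sup>2 = u + 4" using u by (auto simp: w_def)
  have "(20*r)\<^sup>2 = 400 + 400*u" using r(2) by (simp add: power_mult_distrib)
  also have "\<dots> < 36*u\<^sup>2 + 528*u + 1936" using u zero_le_power2[of u] by linarith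
  also have "\<dots> = (6*u + 44)\<^sup>2" by (simp add: power2_eq_square algebra_simps)
  finally have "20*r < 6*u + 44"
    by (rule power_less_imp_less_base) (use u in simp)
  then have "(31416/10000)\<^sup>2 * (r\<^sup>2 + 2*r + 1) < 16 * w\<^sup>2"
    unfolding r(2) w(2) using u by (simp add: power2_eq_square)
  moreover have "(31416/10000*(r + 1))\<^sup>2 = (31416/10000)\<^sup>2 * (r\<^sup>2 + 2*r + 1)"
    unfolding power_mult_distrib by (simp add: power2_eq_square algebra_simps)
  ultimately have "(31416/10000*(r + 1))\<^sup>2 < (4*w)\<^sup>2"
    by (simp add: power_mult_distrib)
  then have "31416/10000*(r + 1) < 4*w"
    by (rule power_less_imp_less_base) (use w in simp)
  then have pi_r: "pi*(r + 1) < 4*w"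
    using pi_lt_31416 r by (smt (verit) mult_right_mono)
  have wr: "2*w*(r + 1) > 0" using r w by simp
  have "pi/2 * u / w = (pi*(r + 1)) * u / (2*w*(r + 1))"
    using wr w by (simp add: field_simps)
  also have "\<dots> < (4*w) * u / (2*w*(r + 1))"
    using pi_r u wr by (intro divide_strict_right_mono mult_strict_right_mono) auto
  also have "\<dots> = 2 * (u / (r + 1))"
    using wr w r by (simp add: field_simps)
  also have "u / (r + 1) = r - 1"
    using r by (simp add: field_simps power2_eq_square)
  finally show ?thesis unfolding r_def w_def by simp
qed

lemma quartic_nonneg:
  fixes a :: real
  assumes "0 \<le> a" "a \<le> 7/10"
  shows "0 \<le> 13591296/1000000 - 88832/1000*a + 273664/1000*a^2 - 192*a^3 - 48*a^4"
proof -
  have cube: "a^3 \<le> h * a^2" and fourth: "a^4 \<le> (h*h) * a^2" if "a \<le> h" for h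
  proof -
    show "a^3 \<le> h * a^2"
      using that assms mult_right_mono[of a h "a^2"] by (simp add: power3_eq_cube power2_eq_square)
    have "a^4 = a^2 * a^2" by (simp flip: power_add)
    also have "\<dots> \<le> h^2 * a^2" using that assms by (intro mult_right_mono power_mono) auto
    finally show "a^4 \<le> (h*h) * a^2" by (simp add: power2_eq_square)
  qed
  have square: "a^2 - 2*m*a + m*m \<ge> 0" for m
    using zero_le_power2[of "a - m"] by (simp add: power2_eq_square algebra_simps)
  consider "a \<le> 35/100" | "35/100 \<le> a" "a \<le> 56/100" | "56/100 \<le> a" by linarith
  then show ?thesis
  proof cases
    case 1
    then show ?thesis using cube[OF 1] fourth[OF 1] square[of "2/10"] assms by linarith
  next
    case 2
    then show ?thesis using cube[OF 2(2)] fourth[OF 2(2)] square[of "29/100"] assms by linarith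
  next
    case 3
    then show ?thesis using cube[OF assms(2)] fourth[OF assms(2)] square[of "56/100"] assms by linarith
  qed
qed

lemma psi2_slope_majorant_lt:
  fixes a s :: real
  assumes a: "0 < a" "a < 1" and s: "s > 0"
  shows "2*a + 3*pi/4 * s / sqrt (s + 3*a\<^sup>2) < 1 + a\<^sup>2 + 2 * s"
proof -
  define b where "b = (1 - a)\<^sup>2"
  have b: "b > 0" using a by (simp add: b_def)
  define w where "w = sqrt (s + 3*a\<^sup>2)"
  have w: "w > 0" "w\<^sup>2 = s + 3*a\<^sup>2" using s by (auto simp: w_def add_pos_nonneg)
  define K :: real where "K = 5552/1000"
  define c2 where "c2 = 4*b + 12*a\<^sup>2 - K"
  define c1 where "c1 = b\<^sup>2 + 12*a\<^sup>2*b"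
  have "(3*pi/4)\<^sup>2 < (3*(31416/10000)/4)\<^sup>2"
    using pi_lt_31416 pi_gt_zero by (intro power_strict_mono) auto
  then have pi_K: "(3*pi/4)\<^sup>2 < K" by (simp add: K_def power2_eq_square)
  have quadratic: "4 * s\<^sup>2 + c2 * s + c1 \<ge> 0"
  proof (cases "a \<ge> 7/10")
    case True
    then have "16*a\<^sup>2 \<ge> 16*(7/10)*a"
      using mult_right_mono[of "7/10" a a] a by (simp add: power2_eq_square)
    moreover have "c2 = 16*a\<^sup>2 - 8*a - 1552/1000"
      by (simp add: c2_def b_def K_def power2_eq_square algebra_simps)
    ultimately have "c2 \<ge> 0" using True by linarith
    moreover have "c1 \<ge> 0" using b by (simp add: c1_def)
    ultimately show ?thesis using s by simp
  next
    case False
    have "16*c1 - c2\<^sup>2 = 13591296/1000000 - 88832/1000*a + 273664/1000*a^2 - 192*a^3 - 48*a^4"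
      unfolding c1_def c2_def b_def K_def by algebra
    then have "16*c1 - c2\<^sup>2 \<ge> 0" using False a quartic_nonneg[of a] by simp
    moreover have "4 * s\<^sup>2 + c2 * s + c1 = 4*(s + c2/8)\<^sup>2 + (16*c1 - c2\<^sup>2)/16"
      by (simp add: power2_eq_square field_simps)
    moreover have "0 \<le> 4*(s + c2/8)\<^sup>2" by simp
    ultimately show ?thesis by simp
  qed
  have "(b + 2 * s)\<^sup>2 * w\<^sup>2 - K * s\<^sup>2 = s * (4 * s\<^sup>2 + c2 * s + c1) + 3*a\<^sup>2*b\<^sup>2"
    unfolding w(2) c1_def c2_def by algebra
  also have "\<dots> > 0" using quadratic s a b by (intro add_nonneg_pos mult_nonneg_nonneg) auto
  finally have K_lt: "K * s\<^sup>2 < ((b + 2 * s) * w)\<^sup>2" unfolding power_mult_distrib by simp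
  have "(3*pi/4 * s)\<^sup>2 = (3*pi/4)\<^sup>2 * s\<^sup>2" by (rule power_mult_distrib)
  also have "\<dots> < K * s\<^sup>2" using pi_K s by simp
  also have "\<dots> < ((b + 2 * s) * w)\<^sup>2" by (rule K_lt)
  finally have "(3*pi/4 * s)\<^sup>2 < ((b + 2 * s) * w)\<^sup>2" .
  then have "3*pi/4 * s < (b + 2 * s) * w"
    by (rule power_less_imp_less_base) (use b s w in simp)
  then have "3*pi/4 * s / w < b + 2 * s"
    using w by (simp add: divide_less_eq)
  then show ?thesis
    unfolding w_def[symmetric] b_def by (simp add: power2_eq_square algebra_simps)
qed

section \<open>The function \<open>phi1\<close> and its inverse\<close>

lemma phi1_integrand_continuous:
  "s > 0 \<Longrightarrow> continuous_on {0..pi/2} (\<lambda>\<theta>. (sin \<theta>)\<^sup>2 / sqrt ((sin \<theta>)\<^sup>2 + s\<^sup>2))"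
  by (intro continuous_intros) (auto simp: add_nonneg_pos)

lemma has_integral_phi1:
  "s > 0 \<Longrightarrow> ((\<lambda>\<theta>. (sin \<theta>)\<^sup>2 / sqrt ((sin \<theta>)\<^sup>2 + s\<^sup>2)) has_integral phi1 s) {0..pi/2}"
  unfolding phi1_def by (intro integrable_integral integrable_continuous_interval phi1_integrand_continuous)

lemma phi1_0: "phi1 0 = 1"
proof -
  have "((\<lambda>\<theta>. (sin \<theta>)\<^sup>2 / sqrt ((sin \<theta>)\<^sup>2 + 0\<^sup>2)) has_integral 1) {0..pi/2}"
  proof (rule has_integral_eq[OF _ has_integral_sin_0_pi_half])
    fix x :: real assume "x \<in> {0..pi/2}"
    then have "sin x \<ge> 0" by (rule sin_nonneg_0_pi_half)
    then show "sin x = (sin x)\<^sup>2 / sqrt ((sin x)\<^sup>2 + 0\<^sup>2)"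
      by (cases "sin x = 0") (auto simp: power2_eq_square)
  qed
  then show ?thesis unfolding phi1_def by (rule integral_unique)
qed

lemma phi1_integrand_ge:
  fixes \<sigma> s :: real
  assumes "\<sigma> \<ge> 0" "s > 0"
  shows "\<sigma> - s \<le> \<sigma>\<^sup>2 / sqrt (\<sigma>\<^sup>2 + s\<^sup>2)"
proof (cases "\<sigma> = 0")
  case True then show ?thesis using assms by simp
next
  case False
  then have sp: "\<sigma> > 0" using assms by simp
  have A: "sqrt (\<sigma>\<^sup>2 + s\<^sup>2) \<le> \<sigma> + s"
  proof -
    have "\<sigma>\<^sup>2 + s\<^sup>2 \<le> (\<sigma> + s)\<^sup>2" using assms by (simp add: power2_eq_square algebra_simps)
    then have "sqrt (\<sigma>\<^sup>2 + s\<^sup>2) \<le> sqrt ((\<sigma> + s)\<^sup>2)" by (rule real_sqrt_le_mono)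
    then show ?thesis using assms by simp
  qed
  have Ap: "sqrt (\<sigma>\<^sup>2 + s\<^sup>2) > 0" using sp by (simp add: add_pos_nonneg)
  have "\<sigma> - s \<le> \<sigma>\<^sup>2 / (\<sigma> + s)"
  proof -
    have "(\<sigma> - s) * (\<sigma> + s) \<le> \<sigma>\<^sup>2" by (simp add: power2_eq_square algebra_simps)
    then show ?thesis using sp assms by (simp add: le_divide_eq)
  qed
  also have "\<dots> \<le> \<sigma>\<^sup>2 / sqrt (\<sigma>\<^sup>2 + s\<^sup>2)"
  proof -
    have "0 < (\<sigma> + s) * sqrt (\<sigma>\<^sup>2 + s\<^sup>2)" using sp assms Ap by simp
    then show ?thesis using A Ap by (intro divide_left_mono) auto
  qed
  finally show ?thesis .
qed

lemma phi1_integrand_le: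
  fixes \<sigma> s :: real
  assumes "\<sigma> \<ge> 0" "\<sigma> \<le> 1" "s > 0"
  shows "\<sigma>\<^sup>2 / sqrt (\<sigma>\<^sup>2 + s\<^sup>2) \<le> 1 / s"
proof -
  have "s \<le> sqrt (\<sigma>\<^sup>2 + s\<^sup>2)" using assms by (intro real_le_rsqrt) simp
  moreover have "\<sigma>\<^sup>2 \<le> 1" using assms by (simp add: power_le_one)
  ultimately show ?thesis using assms by (intro frac_le) auto
qed

lemma phi1_integrand_diff_ge:
  fixes \<sigma> s1 s2 :: real
  assumes sg: "\<sigma> \<ge> 0" "\<sigma> \<le> 1" and s: "0 < s1" "s1 < s2"
  shows "(s2\<^sup>2 - s1\<^sup>2) / (2 * (1 + s2\<^sup>2) * sqrt (1 + s2\<^sup>2)) * \<sigma>\<^sup>2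
         \<le> \<sigma>\<^sup>2 / sqrt (\<sigma>\<^sup>2 + s1\<^sup>2) - \<sigma>\<^sup>2 / sqrt (\<sigma>\<^sup>2 + s2\<^sup>2)"
proof -
  define A where "A = sqrt (\<sigma>\<^sup>2 + s1\<^sup>2)"
  define B where "B = sqrt (\<sigma>\<^sup>2 + s2\<^sup>2)"
  define W where "W = sqrt (1 + s2\<^sup>2)"
  have Ap: "A > 0" using s unfolding A_def by (simp add: add_nonneg_pos)
  have Bp: "B > 0" using s unfolding B_def by (simp add: add_nonneg_pos)
  have Wp: "W > 0" unfolding W_def by (simp add: add_pos_nonneg)
  have A2: "A\<^sup>2 = \<sigma>\<^sup>2 + s1\<^sup>2" unfolding A_def by simp
  have B2: "B\<^sup>2 = \<sigma>\<^sup>2 + s2\<^sup>2" unfolding B_def by simp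
  have W2: "W\<^sup>2 = 1 + s2\<^sup>2" unfolding W_def by simp
  have s12: "s1\<^sup>2 < s2\<^sup>2" using s by (intro power_strict_mono) auto
  have sg2: "\<sigma>\<^sup>2 \<le> 1" using sg by (simp add: power_le_one)
  have AW: "A \<le> W" unfolding A_def W_def using sg2 s12 by (intro real_sqrt_le_mono) auto
  have BW: "B \<le> W" unfolding B_def W_def using sg2 by (intro real_sqrt_le_mono) auto
  have BA: "B - A = (s2\<^sup>2 - s1\<^sup>2) / (A + B)"
  proof -
    have "(B - A) * (A + B) = B\<^sup>2 - A\<^sup>2" by (simp add: power2_eq_square algebra_simps)
    then show ?thesis using Ap Bp A2 B2 by (simp add: eq_divide_eq)
  qed
  have BA': "(s2\<^sup>2 - s1\<^sup>2) / (2 * W) \<le> B - A"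
    unfolding BA using s12 Ap Bp AW BW by (intro divide_left_mono) auto
  have AB: "A * B \<le> W * W" using AW BW Ap Bp by (intro mult_mono) auto
  have "\<sigma>\<^sup>2 / A - \<sigma>\<^sup>2 / B = \<sigma>\<^sup>2 * (B - A) / (A * B)" using Ap Bp by (simp add: field_simps)
  also have "\<dots> \<ge> \<sigma>\<^sup>2 * ((s2\<^sup>2 - s1\<^sup>2) / (2 * W)) / (W * W)"
  proof (rule frac_le)
    have "0 \<le> (s2\<^sup>2 - s1\<^sup>2) / (2 * W)" using s12 Wp by simp
    then show "0 \<le> \<sigma>\<^sup>2 * (B - A)" using BA' by (intro mult_nonneg_nonneg) auto
    show "\<sigma>\<^sup>2 * ((s2\<^sup>2 - s1\<^sup>2) / (2 * W)) \<le> \<sigma>\<^sup>2 * (B - A)" using BA' by (intro mult_left_mono) auto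
    show "0 < A * B" using Ap Bp by simp
    show "A * B \<le> W * W" by (rule AB)
  qed
  also have "\<sigma>\<^sup>2 * ((s2\<^sup>2 - s1\<^sup>2) / (2 * W)) / (W * W) = (s2\<^sup>2 - s1\<^sup>2) / (2 * (1 + s2\<^sup>2) * W) * \<sigma>\<^sup>2"
    using Wp W2 by (simp add: field_simps power2_eq_square)
  finally show ?thesis unfolding A_def B_def W_def .
qed

lemma phi1_ge: "s > 0 \<Longrightarrow> 1 - pi/2 * s \<le> phi1 s"
proof -
  assume s: "s > 0"
  have "((\<lambda>\<theta>. sin \<theta> - s) has_integral 1 - pi/2 * s) {0..pi/2}"
    using has_integral_diff[OF has_integral_sin_0_pi_half has_integral_const_real[of s 0 "pi/2"]]
      pi_gt3 by (simp add: mult.commute)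
  then show ?thesis
    by (rule has_integral_le[OF _ has_integral_phi1[OF s]])
       (use s sin_nonneg_0_pi_half in \<open>auto intro!: phi1_integrand_ge\<close>)
qed

lemma phi1_le: "s > 0 \<Longrightarrow> phi1 s \<le> pi/2 / s"
proof -
  assume s: "s > 0"
  have "((\<lambda>\<theta>. 1/s) has_integral pi/2 / s) {0..pi/2}"
    using has_integral_const_real[of "1/s" 0 "pi/2"] pi_gt3 by simp
  then show ?thesis
    by (rule has_integral_le[OF has_integral_phi1[OF s]])
       (use s sin_nonneg_0_pi_half in \<open>auto intro!: phi1_integrand_le\<close>)
qed

lemma phi1_strict_decreasing:
  assumes s: "0 < s1" "s1 < s2"
  shows "phi1 s2 < phi1 s1"
proof -
  define c where "c = (s2\<^sup>2 - s1\<^sup>2) / (2 * (1 + s2\<^sup>2) * sqrt (1 + s2\<^sup>2))"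
  have "s1\<^sup>2 < s2\<^sup>2" using s by (intro power_strict_mono) auto
  then have "c * (pi/4) > 0" unfolding c_def by (simp add: add_pos_nonneg)
  also have "c * (pi/4) \<le> phi1 s1 - phi1 s2"
  proof (rule has_integral_le)
    show "((\<lambda>\<theta>. c * (sin \<theta>)\<^sup>2) has_integral c * (pi/4)) {0..pi/2}"
      by (intro has_integral_mult_right has_integral_sin_squared_0_pi_half)
    show "((\<lambda>\<theta>. (sin \<theta>)\<^sup>2 / sqrt ((sin \<theta>)\<^sup>2 + s1\<^sup>2) - (sin \<theta>)\<^sup>2 / sqrt ((sin \<theta>)\<^sup>2 + s2\<^sup>2))
            has_integral phi1 s1 - phi1 s2) {0..pi/2}"
      using s by (intro has_integral_diff has_integral_phi1) auto
  qed (use s sin_nonneg_0_pi_half in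
        \<open>auto intro!: phi1_integrand_diff_ge[of _ s1 s2, folded c_def] \<close>)
  finally show ?thesis by simp
qed

lemma isCont_phi1:
  assumes "s > 0"
  shows "isCont phi1 s"
proof -
  let ?f = "\<lambda>s \<theta>. (sin \<theta>)\<^sup>2 / sqrt ((sin \<theta>)\<^sup>2 + s\<^sup>2)"
  let ?f' = "\<lambda>s \<theta>. - ((sin \<theta>)\<^sup>2 * s) / (((sin \<theta>)\<^sup>2 + s\<^sup>2) * sqrt ((sin \<theta>)\<^sup>2 + s\<^sup>2))"
  have "((\<lambda>s. integral {0..pi/2} (?f s)) has_real_derivative integral {0..pi/2} (?f' s)) (at s)"
  proof (rule has_real_derivative_parametric_integral[where U = "{0<..}"])
    fix r \<theta> :: real assume "r \<in> {0<..}"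
    then have "(sin \<theta>)\<^sup>2 + r\<^sup>2 > 0" by (simp add: add_nonneg_pos)
    then show "((\<lambda>s. ?f s \<theta>) has_real_derivative ?f' r \<theta>) (at r)"
      by (auto intro!: derivative_eq_intros) (simp add: field_simps)
  next
    show "continuous_on ({0<..} \<times> {0..pi/2}) (\<lambda>(s, \<theta>). ?f' s \<theta>)"
      unfolding split_def by (intro continuous_intros) (clarsimp simp: add_nonneg_pos)
  qed (use assms phi1_integrand_continuous integrable_continuous_interval in auto)
  then show ?thesis
    unfolding phi1_def[abs_def] by (rule DERIV_isCont)
qed

lemma ex1_phi1_eq:
  fixes a :: real
  assumes a: "0 < a" "a < 1"
  shows "\<exists>!s. 0 \<le> s \<and> phi1 s = a"
proof -
  define e where "e = (1 - a) / 2"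
  define M where "M = 2 / a"
  have "e < 1" "1 < M" using a by (simp_all add: e_def M_def)
  then have e: "0 < e" "e \<le> M" using a by (simp_all add: e_def)
  have "a < 1 - pi/2 * e"
    using a pi_less_4 mult_pos_pos[of "1 - a" "1 - pi/4"] by (simp add: e_def algebra_simps)
  then have "a \<le> phi1 e" using phi1_ge[OF e(1)] by simp
  moreover have "phi1 M \<le> a"
  proof -
    have "phi1 M \<le> pi/2 / M" using a by (intro phi1_le) (simp add: M_def)
    also have "\<dots> = pi/4 * a" using a by (simp add: M_def)
    also have "\<dots> \<le> a" using a pi_less_4 by simp
    finally show ?thesis .
  qed
  moreover have "continuous_on {e..M} phi1"
    using e by (intro continuous_at_imp_continuous_on ballI isCont_phi1) auto
  ultimately obtain x where x: "e \<le> x" "x \<le> M" "phi1 x = a"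
    using IVT2'[of phi1 M a e] e by blast
  show ?thesis
  proof (rule ex1I[of _ x])
    show "0 \<le> x \<and> phi1 x = a" using x e by simp
    fix y assume y: "0 \<le> y \<and> phi1 y = a"
    then have "y > 0" using a phi1_0 by (cases "y = 0") auto
    then show "y = x"
      using phi1_strict_decreasing[of y x] phi1_strict_decreasing[of x y] x y e
      by (cases y x rule: linorder_cases) auto
  qed
qed

lemma phi1_inv_pos:
  fixes a :: real
  assumes "0 < a" "a < 1"
  shows "phi1_inv a > 0"
proof -
  have "0 \<le> phi1_inv a \<and> phi1 (phi1_inv a) = a"
    unfolding phi1_inv_def by (rule theI'[OF ex1_phi1_eq[OF assms]])
  then show ?thesis using assms phi1_0 by (cases "phi1_inv a = 0") auto
qed

lemma has_integral_phi2:
  assumes "t > 0"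
  shows "((\<lambda>\<theta>. (2 * (sin \<theta>)\<^sup>2 + t\<^sup>2) / sqrt ((sin \<theta>)\<^sup>2 + t\<^sup>2)) has_integral phi2 t) {0..pi/2}"
  unfolding phi2_def using assms
  by (intro integrable_integral integrable_continuous_interval continuous_intros) (auto simp: add_nonneg_pos)

lemma phi2_nonneg: "t > 0 \<Longrightarrow> 0 \<le> phi2 t"
  by (rule has_integral_nonneg[OF has_integral_phi2]) auto

lemma phi2_lt:
  fixes t :: real
  assumes t: "t > 0"
  shows "phi2 t < 2 * sqrt (1 + t\<^sup>2)"
proof -
  have "((\<lambda>\<theta>. 2 * sin \<theta> + t^3 * (1 / (t\<^sup>2 + 4 * (sin \<theta>)\<^sup>2)))
          has_integral 2 * 1 + t^3 * (pi / (2 * sqrt (t\<^sup>2 * (t\<^sup>2 + 4))))) {0..pi/2}"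
    using t by (intro has_integral_add has_integral_mult_right has_integral_sin_0_pi_half
        has_integral_inverse_sin_squared) auto
  then have "phi2 t \<le> 2 * 1 + t^3 * (pi / (2 * sqrt (t\<^sup>2 * (t\<^sup>2 + 4))))"
    using phi2_integrand_le[OF sin_nonneg_0_pi_half t]
    by (intro has_integral_le[OF has_integral_phi2[OF t]]) auto
  also have "\<dots> = 2 + pi/2 * t\<^sup>2 / sqrt (t\<^sup>2 + 4)"
  proof -
    have "sqrt (t\<^sup>2 * (t\<^sup>2 + 4)) = t * sqrt (t\<^sup>2 + 4)" using t by (simp add: real_sqrt_mult)
    moreover have "sqrt (t\<^sup>2 + 4) > 0" by (simp add: add_nonneg_pos)
    ultimately show ?thesis using t by (simp add: field_simps power2_eq_square power3_eq_cube)
  qed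
  also have "\<dots> < 2 * sqrt (1 + t\<^sup>2)"
    using t by (intro phi2_majorant_lt) simp
  finally show ?thesis .
qed

lemma L_coefficient_pos:
  fixes t :: real
  assumes "t > 0"
  shows "1 - (phi2 t)\<^sup>2 / (4 * (1 + t\<^sup>2)) > 0"
proof -
  have "(phi2 t)\<^sup>2 < (2 * sqrt (1 + t\<^sup>2))\<^sup>2"
    using assms phi2_nonneg phi2_lt by (intro power_strict_mono) auto
  also have "\<dots> = 4 * (1 + t\<^sup>2)" by (simp add: power_mult_distrib)
  finally show ?thesis by (simp add: add_pos_nonneg)
qed

section \<open>Monotonicity of \<open>s \<mapsto> s \<psi>\<^sub>2(\<alpha>, s; 4)\<close>\<close>

lemma psi2_eq_scaled: "psi2 a s d = 4 / d * psi2 a s 4"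
  by (simp add: psi2_def)

lemma has_real_derivative_mult_sqrt_quotient:
  fixes A s :: real
  assumes A: "A \<ge> 0" and s: "s > 0"
  shows "((\<lambda>s. s * ((2*A + s) / sqrt (A + s))) has_real_derivative
           (3*(A + s)\<^sup>2 + A\<^sup>2) / (2*(A + s) * sqrt (A + s))) (at s)"
proof -
  have "sqrt (A + s) > 0" "sqrt (A + s) * sqrt (A + s) = A + s" using A s by auto
  then show ?thesis
    using A s by (auto intro!: derivative_eq_intros) (simp add: field_simps power2_eq_square)
qed

lemma has_real_derivative_scaled_psi2:
  fixes a x :: real
  assumes x: "x > 0"
  shows "((\<lambda>s. s * psi2 a s 4) has_real_derivative a\<^sup>2 + 1 + 2*x - integral {0..pi/2}
           (\<lambda>\<theta>. (3*(a\<^sup>2*(sin \<theta>)\<^sup>2 + x)\<^sup>2 + (a\<^sup>2*(sin \<theta>)\<^sup>2)\<^sup>2)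
                  / (2*(a\<^sup>2*(sin \<theta>)\<^sup>2 + x) * sqrt (a\<^sup>2*(sin \<theta>)\<^sup>2 + x)))) (at x)"
proof -
  let ?g = "\<lambda>s \<theta>. (2 * a\<^sup>2 * (sin \<theta>)\<^sup>2 + s) / sqrt (a\<^sup>2 * (sin \<theta>)\<^sup>2 + s)"
  let ?f' = "\<lambda>s \<theta>. (3*(a\<^sup>2*(sin \<theta>)\<^sup>2 + s)\<^sup>2 + (a\<^sup>2*(sin \<theta>)\<^sup>2)\<^sup>2)
                  / (2*(a\<^sup>2*(sin \<theta>)\<^sup>2 + s) * sqrt (a\<^sup>2*(sin \<theta>)\<^sup>2 + s))"
  have g_cont: "continuous_on {0..pi/2} (?g s)" if "s > 0" for s
    using that by (intro continuous_intros) (clarsimp; smt (verit) mult_nonneg_nonneg zero_le_power2)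
  have "((\<lambda>s. integral {0..pi/2} (\<lambda>\<theta>. s * ?g s \<theta>)) has_real_derivative
          integral {0..pi/2} (?f' x)) (at x)"
  proof (rule has_real_derivative_parametric_integral[where U = "{0<..}"])
    fix s \<theta> :: real assume "s \<in> {0<..}"
    then show "((\<lambda>s. s * ?g s \<theta>) has_real_derivative ?f' s \<theta>) (at s)"
      using has_real_derivative_mult_sqrt_quotient[of "a\<^sup>2 * (sin \<theta>)\<^sup>2" s]
      by (simp add: mult.assoc)
  next
    fix s :: real assume "s \<in> {0<..}"
    then show "(\<lambda>\<theta>. s * ?g s \<theta>) integrable_on {0..pi/2}"
      using g_cont[of s] by (intro integrable_continuous_interval continuous_on_mult continuous_on_const) auto
  next
    show "continuous_on ({0<..} \<times> {0..pi/2}) (\<lambda>(s, \<theta>). ?f' s \<theta>)"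
      unfolding split_def by (intro continuous_intros) (clarsimp; smt (verit) mult_nonneg_nonneg zero_le_power2)
  qed (use x in auto)
  then have "((\<lambda>s. s * (a\<^sup>2 + s + 1) - integral {0..pi/2} (\<lambda>\<theta>. s * ?g s \<theta>)) has_real_derivative
               a\<^sup>2 + 1 + 2*x - integral {0..pi/2} (?f' x)) (at x)"
    by (auto intro!: derivative_eq_intros)
  then show ?thesis
  proof (rule has_field_derivative_transform_within_open[where S = "{0<..}"])
    fix s :: real assume "s \<in> {0<..}"
    then have "integral {0..pi/2} (\<lambda>\<theta>. s * ?g s \<theta>) = s * integral {0..pi/2} (?g s)"
      using integral_mult[OF integrable_continuous_interval[OF g_cont], of s s] by simp
    then show "s * (a\<^sup>2 + s + 1) - integral {0..pi/2} (\<lambda>\<theta>. s * ?g s \<theta>) = s * psi2 a s 4"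
      by (simp add: psi2_def algebra_simps)
  qed (use x in auto)
qed

lemma integral_psi2_slope_lt:
  fixes a s :: real
  assumes a: "0 < a" "a < 1" and s: "s > 0"
  shows "integral {0..pi/2} (\<lambda>\<theta>. (3*(a\<^sup>2*(sin \<theta>)\<^sup>2 + s)\<^sup>2 + (a\<^sup>2*(sin \<theta>)\<^sup>2)\<^sup>2)
             / (2*(a\<^sup>2*(sin \<theta>)\<^sup>2 + s) * sqrt (a\<^sup>2*(sin \<theta>)\<^sup>2 + s))) < 1 + a\<^sup>2 + 2 * s"
    (is "integral _ ?f < _")
proof -
  define t where "t = sqrt s"
  have t: "t > 0" "t\<^sup>2 = s" using s by (auto simp: t_def)
  have "((\<lambda>\<theta>. 2*a * sin \<theta> + 3/2*t^3 * (1 / (s + 3*a\<^sup>2 * (sin \<theta>)\<^sup>2)))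
          has_integral 2*a * 1 + 3/2*t^3 * (pi / (2 * sqrt (s * (s + 3*a\<^sup>2))))) {0..pi/2}"
    using s by (intro has_integral_add has_integral_mult_right has_integral_sin_0_pi_half
        has_integral_inverse_sin_squared) auto
  moreover have "?f integrable_on {0..pi/2}"
    using s by (intro integrable_continuous_interval continuous_intros) (clarsimp; smt (verit) mult_nonneg_nonneg zero_le_power2)
  moreover have "?f \<theta> \<le> 2*a * sin \<theta> + 3/2*t^3 * (1 / (s + 3*a\<^sup>2 * (sin \<theta>)\<^sup>2))"
    if "\<theta> \<in> {0..pi/2}" for \<theta>
    using psi2_slope_integrand_le[of "a * sin \<theta>" t] a t sin_nonneg_0_pi_half[OF that]
    by (simp add: power_mult_distrib mult.assoc)
  ultimately have "integral {0..pi/2} ?f \<le> 2*a * 1 + 3/2*t^3 * (pi / (2 * sqrt (s * (s + 3*a\<^sup>2))))"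
    by (intro has_integral_le[OF integrable_integral]) auto
  also have "\<dots> = 2*a + 3*pi/4 * s / sqrt (s + 3*a\<^sup>2)"
  proof -
    have "sqrt (s * (s + 3*a\<^sup>2)) = t * sqrt (s + 3*a\<^sup>2)" by (simp add: t_def real_sqrt_mult)
    moreover have "sqrt (s + 3*a\<^sup>2) > 0" using s by (simp add: add_pos_nonneg)
    moreover have "t^3 = t * s" using t by (simp add: power3_eq_cube power2_eq_square)
    ultimately show ?thesis using t by (simp add: field_simps)
  qed
  also have "\<dots> < 1 + a\<^sup>2 + 2 * s"
    by (rule psi2_slope_majorant_lt[OF a s])
  finally show ?thesis .
qed

lemma scaled_psi2_strict_mono:
  fixes a s1 s2 :: real
  assumes a: "0 < a" "a < 1" and s: "0 < s1" "s1 < s2"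
  shows "s1 * psi2 a s1 4 < s2 * psi2 a s2 4"
proof (rule DERIV_pos_imp_increasing[OF s(2)])
  fix x assume "s1 \<le> x" "x \<le> s2"
  then have "x > 0" using s by simp
  then show "\<exists>y. ((\<lambda>s. s * psi2 a s 4) has_real_derivative y) (at x) \<and> y > 0"
    using has_real_derivative_scaled_psi2 integral_psi2_slope_lt[OF a] by fastforce
qed

theorem mainTheorem17:
  fixes a :: real
  assumes "0 < a" and "a < 1"
  shows "\<forall>d1 d2. 0 < d1 \<longrightarrow> d1 < d2 \<longrightarrow> psi2 a (L a d2) d2 < psi2 a (L a d1) d1"
proof (intro allI impI)
  fix d1 d2 :: real
  assume d: "0 < d1" "d1 < d2"
  define C where "C = 1 - (phi2 (phi1_inv a))\<^sup>2 / (4 * (1 + (phi1_inv a)\<^sup>2))"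
  have C: "C > 0"
    unfolding C_def using assms by (intro L_coefficient_pos phi1_inv_pos)
  have L: "L a d = 4 / d * C" for d
    by (simp add: L_def C_def)
  have psi2_L: "psi2 a (L a d) d = L a d * psi2 a (L a d) 4 / C" if "d > 0" for d
    using C that by (subst psi2_eq_scaled) (simp add: L)
  have "0 < L a d2" "L a d2 < L a d1"
    using d C by (auto simp: L intro!: mult_strict_right_mono divide_strict_left_mono)
  then have "L a d2 * psi2 a (L a d2) 4 < L a d1 * psi2 a (L a d1) 4"
    using assms by (intro scaled_psi2_strict_mono)
  then show "psi2 a (L a d2) d2 < psi2 a (L a d1) d1"
    using C d psi2_L by (simp add: divide_strict_right_mono)
qed

end
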